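(* Let $(M,\mathcal M,m)$ be a probability space, $D_0\supseteq D_1\supseteq\cdots$ measurable sets with $m(D_N)\to0$ as $N\to\infty$, $\mathcal I\subseteq\mathcal M$ a sub-$\sigma$-algebra, and $\mathcal G_N:=\mathcal I\vee\sigma(A\in\mathcal M: A\subseteq D_N)$. Then, with $\mathcal N:=\{A\in\mathcal M:m(A)=0\}$, $\bigcap_{N=0}^\infty(\mathcal G_N\vee\mathcal N)\subseteq\mathcal I\vee\mathcal N$. *)

theory Defs
  imports "HOL-Probability.Probability"
begin

definition sa_join :: "'a set \<Rightarrow> 'a set set \<Rightarrow> 'a set set \<Rightarrow> 'a set set" where
  "sa_join \<Omega> F G = sigma_sets \<Omega> (F \<union> G)"

end

theory Submission
  imports Defs
begin

text \<open>
  Call a measurable set \<open>B\<close> \<open>I\<close>-determined outside \<open>E\<close> if it differs from some set of \<open>I\<close>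
  only inside \<open>E\<close> and a null set. For fixed \<open>E\<close> these sets form a \<sigma>-algebra containing
  \<open>I\<close>, the null sets and the measurable subsets of \<open>E\<close>; for \<open>E = D\<^sub>N\<close> they therefore contain \<open>\<G>\<^sub>N \<or> \<N>\<close>.
  If \<open>B\<close> is \<open>I\<close>-determined outside every \<open>D\<^sub>N\<close>, via witnesses \<open>C\<^sub>N \<in> I\<close>, then \<open>B\<close> differs
  from \<open>limsup C\<^sub>N \<in> I\<close> only inside \<open>\<Inter>\<^sub>N D\<^sub>N\<close> and a countable union of null sets, and
  \<open>\<Inter>\<^sub>N D\<^sub>N\<close> is null because \<open>m(D\<^sub>N) \<rightarrow> 0\<close>.
\<close>

definition determined_outside :: "'a measure \<Rightarrow> 'a set set \<Rightarrow> 'a set \<Rightarrow> 'a set set" where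
  "determined_outside M I E = {B \<in> sets M. \<exists>C\<in>I. \<exists>Z\<in>null_sets M. sym_diff B C \<subseteq> E \<union> Z}"

lemma sigma_algebra_determined_outside:
  assumes I: "sigma_algebra (space M) I"
  shows "sigma_algebra (space M) (determined_outside M I E)"
proof -
  interpret I: sigma_algebra "space M" I by (fact I)
  show ?thesis
    unfolding sigma_algebra_iff2
  proof (intro conjI allI ballI impI)
    show "determined_outside M I E \<subseteq> Pow (space M)"
      unfolding determined_outside_def using sets.sets_into_space by auto
    show "{} \<in> determined_outside M I E"
      unfolding determined_outside_def by blast
  next
    fix B assume "B \<in> determined_outside M I E"
    then obtain C Z where "B \<in> sets M" "C \<in> I" "Z \<in> null_sets M" "sym_diff B C \<subseteq> E \<union> Z"
      unfolding determined_outside_def by blast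
    moreover have "sym_diff (space M - B) (space M - C) = sym_diff B C"
      using \<open>B \<in> sets M\<close> \<open>C \<in> I\<close> sets.sets_into_space I.space_closed by blast
    ultimately have "space M - B \<in> sets M" "space M - C \<in> I"
      "sym_diff (space M - B) (space M - C) \<subseteq> E \<union> Z"
      by auto
    with \<open>Z \<in> null_sets M\<close> show "space M - B \<in> determined_outside M I E"
      unfolding determined_outside_def by blast
  next
    fix B :: "nat \<Rightarrow> 'a set" assume "range B \<subseteq> determined_outside M I E"
    then have "\<forall>i. \<exists>C Z. B i \<in> sets M \<and> C \<in> I \<and> Z \<in> null_sets M \<and> sym_diff (B i) C \<subseteq> E \<union> Z"
      unfolding determined_outside_def by blast
    then obtain C Z where BCZ: "\<And>i. B i \<in> sets M" "\<And>i. C i \<in> I" "\<And>i. Z i \<in> null_sets M"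
        "\<And>i. sym_diff (B i) (C i) \<subseteq> E \<union> Z i"
      by metis
    have "sym_diff (\<Union>i. B i) (\<Union>i. C i) \<subseteq> E \<union> (\<Union>i. Z i)"
      using BCZ(4) by blast
    with BCZ show "(\<Union>i. B i) \<in> determined_outside M I E"
      unfolding determined_outside_def by blast
  qed
qed

lemma subset_determined_outside:
  assumes "sigma_algebra (space M) I" and "I \<subseteq> sets M"
  shows "I \<subseteq> determined_outside M I E"
    and "null_sets M \<subseteq> determined_outside M I E"
    and "{A \<in> sets M. A \<subseteq> E} \<subseteq> determined_outside M I E"
proof -
  interpret I: sigma_algebra "space M" I by fact
  show "I \<subseteq> determined_outside M I E"
    and "null_sets M \<subseteq> determined_outside M I E"
    and "{A \<in> sets M. A \<subseteq> E} \<subseteq> determined_outside M I E"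
    using assms(2) I.empty_sets unfolding determined_outside_def by blast+
qed

lemma sa_join_subset:
  assumes "sigma_algebra \<Omega> F" and "A \<subseteq> F" and "B \<subseteq> F"
  shows "sa_join \<Omega> A B \<subseteq> F"
  unfolding sa_join_def using assms by (intro sigma_algebra.sigma_sets_subset) auto

lemma sym_diff_limsup_subset:
  assumes "decseq D" and "\<And>n. sym_diff B (C n) \<subseteq> D n \<union> Z n"
  shows "sym_diff B (\<Inter>n. \<Union>k\<in>{n..}. C k) \<subseteq> (\<Inter>n. D n) \<union> (\<Union>n. Z n)"
proof
  fix x assume x: "x \<in> sym_diff B (\<Inter>n. \<Union>k\<in>{n..}. C k)"
  show "x \<in> (\<Inter>n. D n) \<union> (\<Union>n. Z n)"
  proof (cases "x \<in> (\<Union>n. Z n)")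
    case False
    have "x \<in> D n" for n
    proof -
      have "\<exists>j\<ge>n. x \<in> sym_diff B (C j)"
      proof (cases "x \<in> B")
        case True
        then obtain k where "\<forall>j\<ge>k. x \<notin> C j"
          using x by auto
        then show ?thesis
          using True by (intro exI[of _ "max n k"]) auto
      next
        case False
        then show ?thesis
          using x by auto
      qed
      then obtain j where "j \<ge> n" "x \<in> D j"
        using assms(2) False by blast
      then show ?thesis
        using \<open>decseq D\<close> by (auto simp: decseq_def)
    qed
    then show ?thesis by blast
  qed blast
qed

lemma null_sets_INT_decseq:
  assumes "finite_measure M" and "range D \<subseteq> sets M" and "decseq D"
    and "(\<lambda>n. measure M (D n)) \<longlonglongrightarrow> 0"
  shows "(\<Inter>n. D n) \<in> null_sets M"
proof -
  have "(\<lambda>n. measure M (D n)) \<longlonglongrightarrow> measure M (\<Inter>n. D n)"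
    using assms by (intro Lim_measure_decseq) (auto simp: finite_measure.emeasure_finite)
  then have "measure M (\<Inter>n. D n) = 0"
    using assms(4) LIMSEQ_unique by blast
  then show ?thesis
    using assms by (auto simp: finite_measure.emeasure_eq_measure null_sets_def)
qed

lemma sa_join_null_sets_if_sym_diff_null:
  assumes "I \<subseteq> sets M" and "C \<in> I" and "sym_diff B C \<in> null_sets M"
  shows "B \<in> sa_join (space M) I (null_sets M)"
proof -
  interpret J: sigma_algebra "space M" "sa_join (space M) I (null_sets M)"
    unfolding sa_join_def using assms(1) sets.sets_into_space
    by (intro sigma_algebra_sigma_sets) auto
  have "C \<in> sets M"
    using assms(1,2) by blast
  have "B - C = sym_diff B C - C" and "C - B = sym_diff B C \<inter> C" by blast+
  then have "B - C \<in> null_sets M" and "C - B \<in> null_sets M"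
    using null_set_Diff[OF assms(3) \<open>C \<in> sets M\<close>] null_set_Int1[OF assms(3) \<open>C \<in> sets M\<close>]
    by (simp_all add: Int_commute)
  then have "C \<in> sa_join (space M) I (null_sets M)" "B - C \<in> sa_join (space M) I (null_sets M)"
    "C - B \<in> sa_join (space M) I (null_sets M)"
    unfolding sa_join_def using assms(2) by (auto intro: sigma_sets.Basic)
  moreover have "B = (C - (C - B)) \<union> (B - C)" by blast
  ultimately show ?thesis
    by (metis J.Diff J.Un)
qed

lemma INT_determined_outside_subset:
  assumes "sigma_algebra (space M) I" and "I \<subseteq> sets M"
    and "decseq D" and "(\<Inter>n. D n) \<in> null_sets M"
  shows "(\<Inter>n. determined_outside M I (D n)) \<subseteq> sa_join (space M) I (null_sets M)"
proof
  interpret I: sigma_algebra "space M" I by fact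
  fix B assume "B \<in> (\<Inter>n. determined_outside M I (D n))"
  then have "\<forall>n. \<exists>C Z. B \<in> sets M \<and> C \<in> I \<and> Z \<in> null_sets M \<and> sym_diff B C \<subseteq> D n \<union> Z"
    unfolding determined_outside_def by blast
  then obtain C Z where B: "B \<in> sets M" and C: "\<And>n. C n \<in> I" and Z: "\<And>n. Z n \<in> null_sets M"
    and BC: "\<And>n. sym_diff B (C n) \<subseteq> D n \<union> Z n"
    by metis
  define C_lim where "C_lim = (\<Inter>n. \<Union>k\<in>{n..}. C k)"
  have "C_lim \<in> I"
    unfolding C_lim_def using C by auto
  moreover have "sym_diff B C_lim \<in> null_sets M"
  proof (rule null_sets_subset)
    show "(\<Inter>n. D n) \<union> (\<Union>n. Z n) \<in> null_sets M"
      using assms(4) Z by auto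
    show "sym_diff B C_lim \<in> sets M"
      using B \<open>C_lim \<in> I\<close> assms(2) by auto
    show "sym_diff B C_lim \<subseteq> (\<Inter>n. D n) \<union> (\<Union>n. Z n)"
      unfolding C_lim_def using assms(3) BC by (rule sym_diff_limsup_subset)
  qed
  ultimately show "B \<in> sa_join (space M) I (null_sets M)"
    using assms(2) by (rule sa_join_null_sets_if_sym_diff_null[rotated])
qed

theorem lemma4p4:
  fixes M :: "'a measure" and D :: "nat \<Rightarrow> 'a set" and I :: "'a set set"
  assumes "prob_space M"
    and "\<And>N. D N \<in> sets M"
    and "decseq D"
    and "(\<lambda>N. measure M (D N)) \<longlonglongrightarrow> 0"
    and "sigma_algebra (space M) I"
    and "I \<subseteq> sets M"
  shows "(\<Inter>N. sa_join (space M)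
            (sa_join (space M) I (sigma_sets (space M) {A \<in> sets M. A \<subseteq> D N}))
            (null_sets M))
         \<subseteq> sa_join (space M) I (null_sets M)"
proof -
  have "sa_join (space M) (sa_join (space M) I (sigma_sets (space M) {A \<in> sets M. A \<subseteq> D N}))
          (null_sets M) \<subseteq> determined_outside M I (D N)" for N
    using sigma_algebra_determined_outside[OF assms(5)] subset_determined_outside[OF assms(5,6)]
    by (intro sa_join_subset sigma_algebra.sigma_sets_subset)
  moreover have "(\<Inter>N. D N) \<in> null_sets M"
    using assms(1-4) by (intro null_sets_INT_decseq) (auto simp: prob_space_def)
  ultimately show ?thesis
    using INT_determined_outside_subset[OF assms(5,6,3)] by blast
qed

end
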